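(* For any nonempty valid set $T$, there exist a finite set $R_T$ and a number $n_T$ such that $\mathcal{S}_T(n)\subseteq R_T$ for all $n\ge n_T$.
   Context: For relatively prime positive integers $\alpha,\beta$ and positive integers $a_1,a_2$, the $(\alpha,\beta)$-walk $w^{\alpha,\beta}_k(a_1,a_2)$ is given by $w_1=a_1$, $w_2=a_2$, $w_{k+2}=\alpha w_{k+1}+\beta w_k$ ($k\ge1$). For a positive integer $n$, $s^{\alpha,\beta}(n;a_1,a_2)$ is the (largest) index $s$ with $w^{\alpha,\beta}_s(a_1,a_2)=n$ ($-\infty$ if none), and $s^{\alpha,\beta}(n)=\max_{a_1,a_2\ge1}s^{\alpha,\beta}(n;a_1,a_2)$. A set $T$ is valid if $T\subseteq\{(\alpha,\beta):\alpha,\beta\ge1,\gcd(\alpha,\beta)=1\}$. For valid $T$ define $\bar s_T(n)=\max_{(\alpha,\beta)\in T}s^{\alpha,\beta}(n)$ and $\mathcal{S}_T(n)=\{(\alpha,\beta)\in T:s^{\alpha,\beta}(n)=\bar s_T(n)\}$. *)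

theory Defs
  imports "HOL-Library.Extended_Real"
begin

fun walk0 :: "nat \<Rightarrow> nat \<Rightarrow> nat \<Rightarrow> nat \<Rightarrow> nat \<Rightarrow> nat" where
  "walk0 \<alpha> \<beta> a1 a2 0 = a1"
| "walk0 \<alpha> \<beta> a1 a2 (Suc 0) = a2"
| "walk0 \<alpha> \<beta> a1 a2 (Suc (Suc k)) =
     \<alpha> * walk0 \<alpha> \<beta> a1 a2 (Suc k) + \<beta> * walk0 \<alpha> \<beta> a1 a2 k"

text \<open>The (alpha,beta)-walk, 1-based: walk a b a1 a2 1 = a1, walk a b a1 a2 2 = a2
  (only indices k >= 1 are meaningful).\<close>
definition walk :: "nat \<Rightarrow> nat \<Rightarrow> nat \<Rightarrow> nat \<Rightarrow> nat \<Rightarrow> nat" where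
  "walk \<alpha> \<beta> a1 a2 k = walk0 \<alpha> \<beta> a1 a2 (k - 1)"

definition s_walk :: "nat \<Rightarrow> nat \<Rightarrow> nat \<Rightarrow> nat \<Rightarrow> nat \<Rightarrow> ereal" where
  "s_walk \<alpha> \<beta> n a1 a2 =
     (if \<exists>k\<ge>1. walk \<alpha> \<beta> a1 a2 k = n
      then ereal (real (GREATEST k. k \<ge> 1 \<and> walk \<alpha> \<beta> a1 a2 k = n))
      else -\<infinity>)"

text \<open>s^{alpha,beta}(n) = max over a1,a2 >= 1 (rendered as Sup; the max is attained).\<close>
definition s_ab :: "nat \<Rightarrow> nat \<Rightarrow> nat \<Rightarrow> ereal" where
  "s_ab \<alpha> \<beta> n = (SUP p \<in> {p. fst p \<ge> 1 \<and> snd p \<ge> 1}. s_walk \<alpha> \<beta> n (fst p) (snd p))"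

definition valid :: "(nat \<times> nat) set \<Rightarrow> bool" where
  "valid T \<longleftrightarrow> T \<subseteq> {(\<alpha>, \<beta>). \<alpha> \<ge> 1 \<and> \<beta> \<ge> 1 \<and> coprime \<alpha> \<beta>}"

definition s_bar :: "(nat \<times> nat) set \<Rightarrow> nat \<Rightarrow> ereal" where
  "s_bar T n = (SUP p \<in> T. s_ab (fst p) (snd p) n)"

definition S_set :: "(nat \<times> nat) set \<Rightarrow> nat \<Rightarrow> (nat \<times> nat) set" where
  "S_set T n = {p \<in> T. s_ab (fst p) (snd p) n = s_bar T n}"

end

theory Submission
  imports Defs "HOL-Number_Theory.Cong"
begin

text \<open>Fix (\<alpha>0, \<beta>0) in T and put c = \<alpha>0 + \<beta>0. Every (\<alpha>0, \<beta>0)-walk is a combination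
  w_{k+1}(x, y) = x P_k + y Q_k of the walks started at (1, 0) and (0, 1); these are coprime and
  bounded by c^k, so by the Frobenius bound every n > c^{2k} is such a combination with x, y \<ge> 1,
  i.e. s^{\<alpha>0,\<beta>0}(n) > k. Conversely an (\<alpha>, \<beta>)-walk with positive start grows at least
  like (\<alpha> + \<beta>)^{k/2}. Choosing k with c^{2k} < n \<le> c^{2k+2}, every pair with \<alpha> + \<beta> \<ge> c^8
  has s^{\<alpha>,\<beta>}(n) \<le> k, so only the finitely many pairs with \<alpha> + \<beta> < c^8 can be maximal.\<close>

lemma frobenius_pos_combination:
  fixes a b n :: nat
  assumes "coprime a b" "a * b < n"
  shows "\<exists>x y. x \<ge> 1 \<and> y \<ge> 1 \<and> n = a * x + b * y"
proof (cases "b = 0")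
  case True
  then show ?thesis using assms by (intro exI[of _ n] exI[of _ 1]) auto
next
  case False
  obtain x where "[a * x = n] (mod b)"
    using cong_solve_dvd_nat[of a b n] assms(1) by auto
  define x' where "x' = (if x mod b = 0 then b else x mod b)"
  have x': "1 \<le> x'" "x' \<le> b" "[x' = x] (mod b)"
    using False by (auto simp: x'_def cong_def)
  have "[n = a * x'] (mod b)"
    using \<open>[a * x = n] (mod b)\<close> cong_scalar_left[OF x'(3), of a] by (meson cong_sym cong_trans)
  moreover have "a * x' < n"
    using x'(2) assms(2) by (meson le_less_trans mult_le_mono2)
  ultimately obtain y where y: "n = y * b + a * x'"
    using cong_le_nat[of "a * x'" n] by auto
  with \<open>a * x' < n\<close> have "y \<ge> 1" by (cases y) auto
  with x' y show ?thesis by (metis add.commute mult.commute)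
qed

lemma coprime_add_mult_right_iff:
  fixes m n k :: "'a :: semiring_gcd"
  shows "coprime m (n + k * m) \<longleftrightarrow> coprime m n"
  by (metis add.commute coprime_iff_gcd_eq_1 gcd_add_mult)

lemma walk0_linear:
  "walk0 \<alpha> \<beta> a1 a2 j = a1 * walk0 \<alpha> \<beta> 1 0 j + a2 * walk0 \<alpha> \<beta> 0 1 j"
  by (induction \<alpha> \<beta> a1 a2 j rule: walk0.induct) (simp_all add: algebra_simps)

lemma walk0_Suc: "walk0 \<alpha> \<beta> a1 a2 (Suc j) = walk0 \<alpha> \<beta> a2 (\<alpha> * a2 + \<beta> * a1) j"
  by (induction \<alpha> \<beta> a1 a2 j rule: walk0.induct) simp_all

lemma walk0_1_0_Suc: "walk0 \<alpha> \<beta> 1 0 (Suc j) = \<beta> * walk0 \<alpha> \<beta> 0 1 j"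
  by (simp add: walk0_Suc walk0_linear[of _ _ 0 \<beta>])

text \<open>Since P_{j+1} = \<beta> Q_j, this invariant is the coprimality of P_{j+1} and Q_{j+1}; in
  this form it survives the recurrence Q_{j+2} = \<alpha> Q_{j+1} + \<beta> Q_j.\<close>

lemma coprime_walk0_0_1_Suc:
  assumes "coprime \<alpha> \<beta>"
  shows "coprime (\<beta> * walk0 \<alpha> \<beta> 0 1 j) (walk0 \<alpha> \<beta> 0 1 (Suc j))"
proof (induction j)
  case 0
  then show ?case by simp
next
  case (Suc j)
  let ?q = "walk0 \<alpha> \<beta> 0 1"
  have rec: "?q (Suc (Suc j)) = \<alpha> * ?q (Suc j) + \<beta> * ?q j" by simp
  have "coprime \<beta> (?q (Suc j))" "coprime (?q (Suc j)) (\<beta> * ?q j)"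
    using Suc.IH by (simp_all add: coprime_commute)
  then have "coprime \<beta> (\<alpha> * ?q (Suc j) + ?q j * \<beta>)"
    and "coprime (?q (Suc j)) (\<beta> * ?q j + \<alpha> * ?q (Suc j))"
    using assms by (simp_all only: coprime_add_mult_right_iff) (simp add: coprime_commute)
  then have "coprime \<beta> (?q (Suc (Suc j)))" "coprime (?q (Suc j)) (?q (Suc (Suc j)))"
    unfolding rec by (simp_all add: ac_simps)
  then show ?case by simp
qed

lemma coprime_walk0_1_0_walk0_0_1:
  assumes "coprime \<alpha> \<beta>"
  shows "coprime (walk0 \<alpha> \<beta> 1 0 j) (walk0 \<alpha> \<beta> 0 1 j)"
proof (cases j)
  case 0
  then show ?thesis by simp
next
  case (Suc i)
  show ?thesis
    unfolding Suc walk0_1_0_Suc by (rule coprime_walk0_0_1_Suc[OF assms])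
qed

lemma walk0_le_power:
  assumes "a1 \<le> 1" "a2 \<le> 1" "\<alpha> + \<beta> \<ge> 1"
  shows "walk0 \<alpha> \<beta> a1 a2 j \<le> (\<alpha> + \<beta>) ^ j"
  using assms
proof (induction \<alpha> \<beta> a1 a2 j rule: walk0.induct)
  case (3 \<alpha> \<beta> a1 a2 k)
  let ?c = "\<alpha> + \<beta>"
  have "walk0 \<alpha> \<beta> a1 a2 (Suc (Suc k))
      = \<alpha> * walk0 \<alpha> \<beta> a1 a2 (Suc k) + \<beta> * walk0 \<alpha> \<beta> a1 a2 k" by simp
  also have "\<dots> \<le> \<alpha> * ?c ^ Suc k + \<beta> * ?c ^ k"
    using "3.IH" "3.prems" by (intro add_mono mult_left_mono) auto
  also have "\<dots> \<le> \<alpha> * ?c ^ Suc k + \<beta> * ?c ^ Suc k"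
    using "3.prems" by (intro add_mono mult_left_mono power_increasing) auto
  also have "\<dots> = ?c ^ Suc (Suc k)" by (simp add: algebra_simps)
  finally show ?case .
qed auto

lemma power_le_walk0:
  assumes "\<alpha> \<ge> 1" "a2 \<ge> 1"
  shows "(\<alpha> + \<beta>) ^ (j div 2) \<le> walk0 \<alpha> \<beta> a1 a2 (Suc j)"
  using assms
proof (induction \<alpha> \<beta> a1 a2 j rule: walk0.induct)
  case (3 \<alpha> \<beta> a1 a2 k)
  let ?w = "walk0 \<alpha> \<beta> a1 a2"
  have rec: "?w (Suc (Suc (Suc k))) = \<alpha> * ?w (Suc (Suc k)) + \<beta> * ?w (Suc k)"
    by simp
  have "?w (Suc k) \<le> ?w (Suc (Suc k))"
    using "3.prems" by (simp add: trans_le_add1)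
  then have "(\<alpha> + \<beta>) * ?w (Suc k) \<le> ?w (Suc (Suc (Suc k)))"
    unfolding rec by (simp add: distrib_right)
  moreover have "(\<alpha> + \<beta>) ^ (Suc (Suc k) div 2) \<le> (\<alpha> + \<beta>) * ?w (Suc k)"
    using "3.IH"(2) "3.prems" by simp
  ultimately show ?case by linarith
qed (auto intro: trans_le_add1)

lemma power_le_walk:
  assumes "\<alpha> \<ge> 1" "a1 \<ge> 1" "a2 \<ge> 1"
  shows "(\<alpha> + \<beta>) ^ ((k - 2) div 2) \<le> walk \<alpha> \<beta> a1 a2 k"
proof (cases "k \<le> 1")
  case True
  then show ?thesis using assms(2) by (simp add: walk_def)
next
  case False
  then have "k - 1 = Suc (k - 2)" by simp
  then show ?thesis
    unfolding walk_def by (metis power_le_walk0[OF assms(1,3)])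
qed

lemma s_walk_le_of_hits_le:
  assumes "\<And>k. k \<ge> 1 \<Longrightarrow> walk \<alpha> \<beta> a1 a2 k = n \<Longrightarrow> k \<le> u"
  shows "s_walk \<alpha> \<beta> n a1 a2 \<le> ereal u"
proof (cases "\<exists>k\<ge>1. walk \<alpha> \<beta> a1 a2 k = n")
  case True
  let ?P = "\<lambda>k. k \<ge> 1 \<and> walk \<alpha> \<beta> a1 a2 k = n"
  from True obtain k where "?P k" by blast
  then have "?P (Greatest ?P)"
    using assms by (intro GreatestI_nat[of ?P k u]) auto
  then have "Greatest ?P \<le> u" using assms by blast
  then show ?thesis using True by (simp add: s_walk_def)
qed (auto simp: s_walk_def)

lemma s_ab_le_of_hits_le:
  assumes "\<And>a1 a2 k. a1 \<ge> 1 \<Longrightarrow> a2 \<ge> 1 \<Longrightarrow> k \<ge> 1 \<Longrightarrow> walk \<alpha> \<beta> a1 a2 k = n \<Longrightarrow> k \<le> u"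
  shows "s_ab \<alpha> \<beta> n \<le> ereal u"
  unfolding s_ab_def using assms by (auto intro!: SUP_least s_walk_le_of_hits_le)

lemma hit_index_le_s_ab:
  assumes "\<alpha> \<ge> 1" "\<beta> \<ge> 1" "a1 \<ge> 1" "a2 \<ge> 1" "k \<ge> 1" "walk \<alpha> \<beta> a1 a2 k = n"
  shows "ereal k \<le> s_ab \<alpha> \<beta> n"
proof -
  let ?P = "\<lambda>k. k \<ge> 1 \<and> walk \<alpha> \<beta> a1 a2 k = n"
  have hits_bounded: "j \<le> 2 * n + 1" if "?P j" for j
  proof -
    have "2 ^ ((j - 2) div 2) \<le> (\<alpha> + \<beta>) ^ ((j - 2) div 2)"
      using assms(1,2) by (intro power_mono) auto
    also have "\<dots> \<le> n"
      using power_le_walk[OF assms(1,3,4)] that by metis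
    also have "n < 2 ^ n" by (rule less_exp)
    finally have "(j - 2) div 2 < n" by (simp add: power_less_imp_less_exp)
    then show ?thesis by linarith
  qed
  have "k \<le> Greatest ?P"
    using assms(5,6) hits_bounded by (intro Greatest_le_nat) auto
  then have "ereal k \<le> s_walk \<alpha> \<beta> n a1 a2"
    using assms(5,6) by (auto simp: s_walk_def)
  also have "\<dots> \<le> s_ab \<alpha> \<beta> n"
    unfolding s_ab_def using assms(3,4) by (intro SUP_upper2[of "(a1, a2)"]) auto
  finally show ?thesis .
qed

lemma s_ab_ge_of_power_less:
  assumes "\<alpha> \<ge> 1" "\<beta> \<ge> 1" "coprime \<alpha> \<beta>" "(\<alpha> + \<beta>) ^ (2 * k) < n"
  shows "ereal (Suc k) \<le> s_ab \<alpha> \<beta> n"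
proof -
  let ?p = "walk0 \<alpha> \<beta> 1 0 k" and ?q = "walk0 \<alpha> \<beta> 0 1 k"
  have "?p * ?q \<le> (\<alpha> + \<beta>) ^ k * (\<alpha> + \<beta>) ^ k"
    using assms(1) by (intro mult_le_mono walk0_le_power) auto
  also have "\<dots> = (\<alpha> + \<beta>) ^ (2 * k)"
    by (simp add: mult_2 power_add)
  finally have "?p * ?q < n"
    using assms(4) by linarith
  then obtain x y where xy: "x \<ge> 1" "y \<ge> 1" "n = ?p * x + ?q * y"
    using frobenius_pos_combination coprime_walk0_1_0_walk0_0_1[OF assms(3)] by blast
  then have "walk \<alpha> \<beta> x y (Suc k) = n"
    unfolding walk_def by (simp add: walk0_linear[of \<alpha> \<beta> x y] mult.commute)
  then show ?thesis
    by (intro hit_index_le_s_ab[OF assms(1,2) xy(1,2)]) auto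
qed

lemma s_ab_le_of_less_power:
  assumes "\<alpha> \<ge> 1" "\<beta> \<ge> 1" "n < (\<alpha> + \<beta>) ^ t"
  shows "s_ab \<alpha> \<beta> n \<le> ereal (2 * t + 1)"
proof (rule s_ab_le_of_hits_le)
  fix a1 a2 k
  assume "a1 \<ge> 1" "a2 \<ge> 1" "walk \<alpha> \<beta> a1 a2 k = n"
  then have "(\<alpha> + \<beta>) ^ ((k - 2) div 2) < (\<alpha> + \<beta>) ^ t"
    using power_le_walk[OF assms(1)] assms(3) by (metis le_less_trans)
  then have "(k - 2) div 2 < t"
    using assms(1,2) by (simp add: power_less_imp_less_exp)
  then show "k \<le> 2 * t + 1" by linarith
qed

lemma s_ab_less_of_large_sum:
  assumes "\<alpha>0 \<ge> 1" "\<beta>0 \<ge> 1" "coprime \<alpha>0 \<beta>0" "(\<alpha>0 + \<beta>0) ^ 12 < n"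
    and "\<alpha> \<ge> 1" "\<beta> \<ge> 1" "(\<alpha>0 + \<beta>0) ^ 8 \<le> \<alpha> + \<beta>"
  shows "s_ab \<alpha> \<beta> n < s_ab \<alpha>0 \<beta>0 n"
proof -
  define D where "D = (\<alpha>0 + \<beta>0) ^ 2"
  have pow_D: "D ^ m = (\<alpha>0 + \<beta>0) ^ (2 * m)" for m
    by (simp add: D_def power_mult)
  have "2 \<le> D"
    using assms(1,2) power_mono[of 2 "\<alpha>0 + \<beta>0" 2] by (simp add: D_def)
  moreover have "D ^ 6 < n"
    using assms(4) by (simp add: pow_D)
  moreover have "2 \<le> n"
    using \<open>2 \<le> D\<close> \<open>D ^ 6 < n\<close> self_le_power[of D 6] by linarith
  ultimately obtain k where k: "D ^ k < n" "n \<le> D ^ (k + 1)"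
    using ex_power_ivl2 by blast
  have "6 \<le> k"
  proof (rule ccontr)
    assume "\<not> 6 \<le> k"
    then have "D ^ (k + 1) \<le> D ^ 6"
      using \<open>2 \<le> D\<close> by (intro power_increasing) auto
    with k \<open>D ^ 6 < n\<close> show False by linarith
  qed
  define t where "t = (k - 1) div 2"
  have "k + 1 < 4 * t"
    using \<open>6 \<le> k\<close> unfolding t_def by linarith
  then have "D ^ (k + 1) < D ^ (4 * t)"
    using \<open>2 \<le> D\<close> by (intro power_strict_increasing) auto
  with k(2) have "n < D ^ (4 * t)"
    by linarith
  also have "\<dots> = ((\<alpha>0 + \<beta>0) ^ 8) ^ t"
    by (simp add: pow_D power_mult)
  also have "\<dots> \<le> (\<alpha> + \<beta>) ^ t"
    using assms(7) by (rule power_mono) simp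
  finally have "s_ab \<alpha> \<beta> n \<le> ereal (2 * t + 1)"
    using assms(5,6) by (intro s_ab_le_of_less_power)
  also have "\<dots> < ereal (Suc k)"
    using \<open>6 \<le> k\<close> by (simp add: t_def)
  also have "\<dots> \<le> s_ab \<alpha>0 \<beta>0 n"
    using k(1) by (intro s_ab_ge_of_power_less assms(1-3)) (simp add: pow_D)
  finally show ?thesis .
qed

theorem theorem5p1:
  fixes T :: "(nat \<times> nat) set"
  assumes "T \<noteq> {}" and "valid T"
  shows "\<exists>R :: (nat \<times> nat) set. \<exists>nT :: nat. finite R \<and> (\<forall>n\<ge>nT. S_set T n \<subseteq> R)"
proof -
  obtain \<alpha>0 \<beta>0 where p0: "(\<alpha>0, \<beta>0) \<in> T"
    using assms(1) by auto
  then have p0_valid: "\<alpha>0 \<ge> 1" "\<beta>0 \<ge> 1" "coprime \<alpha>0 \<beta>0"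
    using assms(2) by (auto simp: valid_def)
  let ?M = "(\<alpha>0 + \<beta>0) ^ 8"
  define R where "R = {(\<alpha>, \<beta>). \<alpha> + \<beta> < ?M}"
  have "finite R"
    by (rule finite_subset[of _ "{..<?M} \<times> {..<?M}"]) (auto simp: R_def)
  moreover have "S_set T n \<subseteq> R" if "(\<alpha>0 + \<beta>0) ^ 12 < n" for n
  proof
    fix p assume "p \<in> S_set T n"
    then obtain \<alpha> \<beta> where p: "p = (\<alpha>, \<beta>)" "(\<alpha>, \<beta>) \<in> T" "s_ab \<alpha> \<beta> n = s_bar T n"
      by (cases p) (auto simp: S_set_def)
    have "s_ab \<alpha>0 \<beta>0 n \<le> s_ab \<alpha> \<beta> n"
      unfolding p(3) s_bar_def using p0 by (auto intro: SUP_upper2)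
    moreover have "\<alpha> \<ge> 1" "\<beta> \<ge> 1"
      using p(2) assms(2) by (auto simp: valid_def)
    ultimately have "\<not> ?M \<le> \<alpha> + \<beta>"
      using s_ab_less_of_large_sum[OF p0_valid that] by fastforce
    then show "p \<in> R"
      by (simp add: R_def p(1))
  qed
  ultimately show ?thesis
    by (intro exI[of _ R] exI[of _ "Suc ((\<alpha>0 + \<beta>0) ^ 12)"]) auto
qed

end
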